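(* Let $U$ be a convex subset of the plane, let $D\subset U$ be an annulus with center $O$ and radii $0<r<R$, and let $f\colon U\to\mathbb{R}$ be convex. For $s>0$ let $C(s)$ be the circle with center $O$ and radius $s$. Then $$\operatorname{Avg}(f,D)\le\frac13\left[\frac{R}{r+R}\operatorname{Avg}\left(f,C\left(\frac{r+2R}{3}\right)\right)+\frac{r}{r+R}\operatorname{Avg}\left(f,C\left(\frac{2r+R}{3}\right)\right)\right]$$ $$\qquad+\frac23\left[\frac{r+2R}{3(r+R)}\operatorname{Avg}(f,C(R))+\frac{2r+R}{3(r+R)}\operatorname{Avg}(f,C(r))\right].$$
   Context: $\operatorname{Avg}(f,D)=\frac{1}{\operatorname{Area}(D)}\iint_D f$ is the average over the annulus with respect to area, and $\operatorname{Avg}(f,C(s))=\frac{1}{2\pi s}\int_{C(s)}f\,ds$ is the average over the circle with respect to arc length. *)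

theory Defs
  imports "HOL-Analysis.Analysis"
begin

definition annulus :: "complex \<Rightarrow> real \<Rightarrow> real \<Rightarrow> complex set" where
  "annulus c r R = {z. r \<le> cmod (z - c) \<and> cmod (z - c) \<le> R}"

definition avg_area :: "(complex \<Rightarrow> real) \<Rightarrow> complex set \<Rightarrow> real" where
  "avg_area f D = integral D f / measure lebesgue D"

text \<open>Average over the circle C(c,s) with respect to arc length:
  (1/(2 pi s)) times the arc-length integral, parametrised by t \<mapsto> c + s e^{it},
  whose speed is s.\<close>
definition avg_circle :: "(complex \<Rightarrow> real) \<Rightarrow> complex \<Rightarrow> real \<Rightarrow> real" where
  "avg_circle f c s = (1 / (2 * pi * s)) * integral {0..2*pi} (\<lambda>t. f (c + of_real s * cis t) * s)"

end

theory Submission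
  imports Defs
begin

text \<open>In polar coordinates the area integral of \<open>f\<close> over the annulus becomes
  \<open>\<integral>\<^sub>r\<^sup>R s h(s) ds\<close>, where \<open>h(s)\<close> is the integral of \<open>f\<close> over the angle
  on the circle of radius \<open>s\<close>; \<open>h\<close> is convex because \<open>f\<close> is convex along every ray.
  Writing \<open>s = (r(R - s) + R(s - r))/(R - r)\<close>, each of the two weights is integrated against
  the piecewise linear interpolant of \<open>h\<close> at \<open>r\<close>, one interior third point and \<open>R\<close>, which
  dominates \<open>h\<close>; convexity once more moves part of the weight of the interior node to the
  endpoints. A convex \<open>f\<close> is continuous in the open disc and bounded below on the annulus,
  so its integral over the annulus converges absolutely and Fubini applies.\<close>

section \<open>Weighted integrals of convex functions on an interval\<close>

lemma has_integral_real_antiderivative: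
  fixes P p :: "real \<Rightarrow> real"
  assumes "a \<le> b" "\<And>x. (P has_real_derivative p x) (at x)"
  shows "(p has_integral (P b - P a)) {a..b}"
  using assms by (intro fundamental_theorem_of_calculus)
    (auto simp: has_real_derivative_iff_has_vector_derivative[symmetric] intro: DERIV_subset)

lemma continuous_mult_absolutely_integrable_integrable:
  fixes p h :: "real \<Rightarrow> real"
  assumes "h absolutely_integrable_on {a..b}" "continuous_on {a..b} p"
  shows "(\<lambda>s. p s * h s) integrable_on {a..b}"
proof -
  have "(\<lambda>s. p s * h s) absolutely_integrable_on {a..b}"
    using assms by (intro absolutely_integrable_bounded_measurable_product_real
        continuous_imp_measurable_on_sets_lebesgue compact_imp_bounded compact_continuous_image) auto
  then show ?thesis
    using set_lebesgue_integral_eq_integral(1) by blast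
qed

lemma convex_on_integral_linear_weight_le:
  fixes h :: "real \<Rightarrow> real"
  assumes "x < y" "p \<le> x" and convex: "convex_on {x..y} h"
    and int: "(\<lambda>s. (s - p) * h s) integrable_on {x..y}"
  defines "L \<equiv> y - x" and "a \<equiv> x - p"
  shows "integral {x..y} (\<lambda>s. (s - p) * h s) \<le> h x * L * (L + 3*a) / 6 + h y * L * (2*L + 3*a) / 6"
proof -
  define chord where "chord s = (s - x + a) * ((x + L - s) * h x + (s - x) * h y) / L" for s
  define P where "P s = (h x * (L * (s - x)^2 / 2 - (s - x)^3 / 3 + a * (L * (s - x) - (s - x)^2 / 2))
    + h y * ((s - x)^3 / 3 + a * (s - x)^2 / 2)) / L" for s
  have L: "L > 0" "y - x = L"
    using assms by (simp_all add: L_def)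
  have "(P has_real_derivative chord s) (at s)" for s
    unfolding P_def chord_def
    by (rule derivative_eq_intros refl | simp)+
      (use L in \<open>simp add: power2_eq_square power3_eq_cube eval_nat_numeral,
        simp add: field_simps, simp add: power2_eq_square algebra_simps\<close>)
  then have chord_integral: "(chord has_integral (P y - P x)) {x..y}"
    using assms(1) by (intro has_integral_real_antiderivative) auto
  have "integral {x..y} (\<lambda>s. (s - p) * h s) \<le> P y - P x"
  proof (rule has_integral_le[OF integrable_integral[OF int] chord_integral])
    fix s assume s: "s \<in> {x..y}"
    have "h s \<le> (h y - h x) / (y - x) * (s - x) + h x"
      by (rule convex_onD_Icc'[OF convex s])
    also have "\<dots> = ((x + L - s) * h x + (s - x) * h y) / L"
      using L(1) by (simp add: L_def field_simps)
    finally have "(s - p) * h s \<le> (s - p) * (((x + L - s) * h x + (s - x) * h y) / L)"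
      using s assms(2) by (intro mult_left_mono) auto
    then show "(s - p) * h s \<le> chord s"
      unfolding chord_def a_def by simp
  qed
  also have "P y - P x = h x * L * (L + 3*a) / 6 + h y * L * (2*L + 3*a) / 6"
    using L unfolding P_def L(2) by (simp add: field_simps power2_eq_square power3_eq_cube)
  finally show ?thesis .
qed

lemma convex_on_integral_mult_dist_left_le:
  fixes h :: "real \<Rightarrow> real"
  assumes "r < R" and convex: "convex_on {r..R} h" and int: "h absolutely_integrable_on {r..R}"
  shows "integral {r..R} (\<lambda>s. (s - r) * h s)
    \<le> (R - r)^2 * (h r / 9 + h ((r + 2*R)/3) / 6 + 2 * h R / 9)"
proof -
  define m where "m = (r + 2*R)/3"
  have m: "r < m" "m < R"
    using assms(1) by (auto simp: m_def)
  have weighted_int: "(\<lambda>s. (s - r) * h s) integrable_on {r..R}"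
    by (rule continuous_mult_absolutely_integrable_integrable[OF int]) (intro continuous_intros)
  have "integral {r..R} (\<lambda>s. (s - r) * h s)
      = integral {r..m} (\<lambda>s. (s - r) * h s) + integral {m..R} (\<lambda>s. (s - r) * h s)"
    using Henstock_Kurzweil_Integration.integral_combine[OF _ _ weighted_int] m by simp
  also have "\<dots> \<le> (h r * (m - r) * ((m - r) + 3 * (r - r)) / 6 + h m * (m - r) * (2 * (m - r) + 3 * (r - r)) / 6)
      + (h m * (R - m) * ((R - m) + 3 * (m - r)) / 6 + h R * (R - m) * (2 * (R - m) + 3 * (m - r)) / 6)"
  proof (rule add_mono)
    show "integral {r..m} (\<lambda>s. (s - r) * h s)
        \<le> h r * (m - r) * ((m - r) + 3 * (r - r)) / 6 + h m * (m - r) * (2 * (m - r) + 3 * (r - r)) / 6"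
      using m by (intro convex_on_integral_linear_weight_le convex_on_subset[OF convex]
          integrable_on_subinterval[OF weighted_int]) auto
    show "integral {m..R} (\<lambda>s. (s - r) * h s)
        \<le> h m * (R - m) * ((R - m) + 3 * (m - r)) / 6 + h R * (R - m) * (2 * (R - m) + 3 * (m - r)) / 6"
      using m by (intro convex_on_integral_linear_weight_le convex_on_subset[OF convex]
          integrable_on_subinterval[OF weighted_int]) auto
  qed
  also have "\<dots> = (R - r)^2 * (2 * h r / 27 + 5 * h m / 18 + 4 * h R / 27)"
    by (simp add: m_def field_simps power2_eq_square)
  also have "\<dots> \<le> (R - r)^2 * (h r / 9 + h m / 6 + 2 * h R / 9)"
  proof -
    have "h m \<le> (h R - h r) / (R - r) * (m - r) + h r"
      using m by (intro convex_onD_Icc'[OF convex]) auto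
    also have "\<dots> = (h r + 2 * h R) / 3"
      using assms(1) by (simp add: m_def field_simps)
    finally show ?thesis
      by (intro mult_left_mono) auto
  qed
  finally show ?thesis
    by (simp add: m_def)
qed

lemma convex_on_integral_mult_dist_right_le:
  fixes h :: "real \<Rightarrow> real"
  assumes "r < R" and convex: "convex_on {r..R} h" and int: "h absolutely_integrable_on {r..R}"
  shows "integral {r..R} (\<lambda>s. (R - s) * h s)
    \<le> (R - r)^2 * (2 * h r / 9 + h ((2*r + R)/3) / 6 + h R / 9)"
proof -
  define k where "k s = h (- s)" for s
  have "convex_on {-R..-r} k"
  proof (rule convex_onI)
    fix t x y :: real assume "0 < t" "t < 1" "x \<in> {-R..-r}" "y \<in> {-R..-r}"
    then show "k ((1 - t) *\<^sub>R x + t *\<^sub>R y) \<le> (1 - t) * k x + t * k y"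
      using convex_onD[OF convex, of t "-x" "-y"] by (simp add: k_def)
  qed simp
  moreover have "k absolutely_integrable_on {-R..-r}"
    using has_absolute_integral_reflect_real[of "{-R..-r}" "{r..R}" h "integral {r..R} h"] int
    unfolding k_def by auto
  ultimately have "integral {-R..-r} (\<lambda>s. (s - - R) * k s)
      \<le> (-r - - R)^2 * (k (-R) / 9 + k ((-R + 2*(-r))/3) / 6 + 2 * k (-r) / 9)"
    using assms(1) by (intro convex_on_integral_mult_dist_left_le) auto
  moreover have "integral {-R..-r} (\<lambda>s. (s - - R) * k s) = integral {r..R} (\<lambda>s. (R - s) * h s)"
    using Henstock_Kurzweil_Integration.integral_reflect_real[of R r "\<lambda>s. (R - s) * h s"]
    by (simp add: k_def add.commute)
  moreover have "k ((-R + 2*(-r))/3) = h ((2*r + R)/3)"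
  proof -
    have "- ((-R + 2*(-r))/3) = (2*r + R)/3"
      by (simp add: field_simps)
    then show ?thesis
      unfolding k_def by (simp only:)
  qed
  ultimately show ?thesis
    by (simp add: k_def ac_simps)
qed

lemma convex_on_integral_mult_id_le:
  fixes h :: "real \<Rightarrow> real"
  assumes "0 < r" "r < R" and convex: "convex_on {r..R} h" and int: "h absolutely_integrable_on {r..R}"
  shows "integral {r..R} (\<lambda>s. s * h s) \<le> (R - r) * ((2*r + R)/9 * h r + r/6 * h ((2*r + R)/3)
    + R/6 * h ((r + 2*R)/3) + (r + 2*R)/9 * h R)"
proof -
  have int_right: "(\<lambda>s. (R - s) * h s) integrable_on {r..R}"
    and int_left: "(\<lambda>s. (s - r) * h s) integrable_on {r..R}"
    by (rule continuous_mult_absolutely_integrable_integrable[OF int], intro continuous_intros)+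
  have split: "(\<lambda>s. s * h s) = (\<lambda>s. r / (R - r) * ((R - s) * h s) + R / (R - r) * ((s - r) * h s))"
    using assms(2) by (simp add: fun_eq_iff divide_simps) (simp add: algebra_simps)
  have "integral {r..R} (\<lambda>s. s * h s)
      = r / (R - r) * integral {r..R} (\<lambda>s. (R - s) * h s) + R / (R - r) * integral {r..R} (\<lambda>s. (s - r) * h s)"
    unfolding split
    by (subst integral_add)
      (use int_right int_left in \<open>auto intro: integrable_on_mult_right simp only: integral_mult_right\<close>)
  also have "\<dots> \<le> r / (R - r) * ((R - r)^2 * (2 * h r / 9 + h ((2*r + R)/3) / 6 + h R / 9))
      + R / (R - r) * ((R - r)^2 * (h r / 9 + h ((r + 2*R)/3) / 6 + 2 * h R / 9))"
    using assms convex_on_integral_mult_dist_right_le[OF assms(2) convex int]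
      convex_on_integral_mult_dist_left_le[OF assms(2) convex int]
    by (intro add_mono mult_left_mono) auto
  also have "\<dots> = r * (R - r) * (2 * h r / 9 + h ((2*r + R)/3) / 6 + h R / 9)
      + R * (R - r) * (h r / 9 + h ((r + 2*R)/3) / 6 + 2 * h R / 9)"
    using assms(2) by (simp add: power2_eq_square)
  also have "\<dots> = (R - r) * ((2*r + R)/9 * h r + r/6 * h ((2*r + R)/3)
      + R/6 * h ((r + 2*R)/3) + (r + 2*R)/9 * h R)"
    by (simp add: field_simps)
  finally show ?thesis .
qed

section \<open>Polar coordinates\<close>

lemma has_absolute_integral_change_of_variables_real_vec:
  fixes f :: "real^'n::{finite,wellorder} \<Rightarrow> real" and g :: "real^'n::_ \<Rightarrow> real^'n::_"
  assumes "S \<in> sets lebesgue"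
    and "\<And>x. x \<in> S \<Longrightarrow> (g has_derivative g' x) (at x within S)"
    and "inj_on g S"
  shows "(\<lambda>x. \<bar>det (matrix (g' x))\<bar> * f (g x)) absolutely_integrable_on S \<and>
           integral S (\<lambda>x. \<bar>det (matrix (g' x))\<bar> * f (g x)) = b
     \<longleftrightarrow> f absolutely_integrable_on (g ` S) \<and> integral (g ` S) f = b"
proof -
  have "(\<lambda>x. \<bar>det (matrix (g' x))\<bar> *\<^sub>R vec (f (g x)) :: real^1) absolutely_integrable_on S \<and>
           integral S (\<lambda>x. \<bar>det (matrix (g' x))\<bar> *\<^sub>R vec (f (g x))) = (vec b :: real^1)
         \<longleftrightarrow> (\<lambda>x. vec (f x) :: real^1) absolutely_integrable_on (g ` S) \<and>
           integral (g ` S) (\<lambda>x. vec (f x)) = (vec b :: real^1)"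
    using assms by (intro has_absolute_integral_change_of_variables) auto
  then show ?thesis
    by (simp add: absolutely_integrable_on_1_iff integral_on_1_eq)
qed

lemma absolutely_integrable_on_iff_set_integrable_lborel:
  fixes f :: "'a::euclidean_space \<Rightarrow> 'b::euclidean_space"
  assumes "(\<lambda>x. indicator S x *\<^sub>R f x) \<in> borel_measurable borel"
  shows "f absolutely_integrable_on S \<longleftrightarrow> set_integrable lborel S f"
  unfolding set_integrable_def using assms by (subst integrable_completion) auto

lemma compact_annulus: "compact (annulus c r R)"
proof -
  have "annulus c r R = cball c R - ball c r"
    by (auto simp: annulus_def dist_norm norm_minus_commute)
  then show ?thesis
    by (simp add: compact_diff)
qed

lemma annulus_sets_borel [measurable]: "annulus c r R \<in> sets borel"
  by (simp add: compact_annulus compact_imp_closed)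

text \<open>The plane \<open>complex\<close> and the product \<open>real \<times> real\<close> are identified with \<open>real^2\<close> via
  \<open>complex_of_vec\<close> and \<open>vec_of_pair\<close>, both of which preserve Lebesgue measure.\<close>

definition polar_map :: "complex \<Rightarrow> real^2 \<Rightarrow> real^2" where
  "polar_map c x = vector [Re c, Im c] + (x$1 * cos (x$2)) *\<^sub>R axis 1 1 + (x$1 * sin (x$2)) *\<^sub>R axis 2 1"

definition polar_map_deriv :: "real^2 \<Rightarrow> real^2 \<Rightarrow> real^2" where
  "polar_map_deriv x h = (h$1 * cos (x$2) - x$1 * (sin (x$2) * h$2)) *\<^sub>R axis 1 1
     + (h$1 * sin (x$2) + x$1 * (cos (x$2) * h$2)) *\<^sub>R axis 2 1"

definition complex_of_vec :: "real^2 \<Rightarrow> complex" where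
  "complex_of_vec x = Complex (x$1) (x$2)"

definition vec_of_pair :: "real \<times> real \<Rightarrow> real^2" where
  "vec_of_pair p = fst p *\<^sub>R axis 1 1 + snd p *\<^sub>R axis 2 1"

lemma has_derivative_polar_map: "(polar_map c has_derivative polar_map_deriv x) (at x within S)"
  unfolding polar_map_def polar_map_deriv_def
  by (rule derivative_eq_intros bounded_linear.has_derivative[OF bounded_linear_vec_nth] | simp)+
    (auto simp: algebra_simps)

lemma det_polar_map_deriv: "det (matrix (polar_map_deriv x)) = x$1"
proof -
  have "cos a * (b * cos a) + b * sin a * sin a = b" for a b :: real
    by (metis mult.commute mult.left_commute distrib_left sin_cos_squared_add3 mult_1_right add.commute)
  then show ?thesis
    by (simp add: det_2 matrix_def polar_map_deriv_def axis_def)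
qed

lemma complex_of_vec_polar_map: "complex_of_vec (polar_map c x) = c + of_real (x$1) * cis (x$2)"
  by (simp add: complex_of_vec_def polar_map_def complex_eq_iff axis_def)

lemma complex_of_vec_inject: "complex_of_vec x = complex_of_vec y \<longleftrightarrow> x = y"
  by (auto simp: complex_of_vec_def vec_eq_iff forall_2)

lemma vec_of_pair_nth [simp]: "vec_of_pair p $ 1 = fst p" "vec_of_pair p $ 2 = snd p"
  by (simp_all add: vec_of_pair_def axis_def)

lemma complex_of_vec_measurable [measurable]: "complex_of_vec \<in> borel_measurable borel"
  unfolding complex_of_vec_def by (intro borel_measurable_continuous_onI continuous_intros)

lemma vec_of_pair_measurable [measurable]: "vec_of_pair \<in> borel_measurable borel"
  unfolding vec_of_pair_def by (intro borel_measurable_continuous_onI continuous_intros)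

lemma polar_map_measurable [measurable]: "polar_map c \<in> borel_measurable borel"
  unfolding polar_map_def by (intro borel_measurable_continuous_onI continuous_intros)

lemma mem_box_vec2: "y \<in> box a b \<longleftrightarrow> a$1 < y$1 \<and> y$1 < b$1 \<and> a$2 < y$2 \<and> y$2 < b$2"
  for y a b :: "real^2"
  by (simp add: mem_box_cart forall_2)

lemma prod_Basis_vec2: "(\<Prod>b\<in>(Basis::(real^2) set). F b) = F (axis 1 1) * F (axis 2 1)"
proof -
  have B: "(Basis::(real^2) set) = {axis 1 1, axis 2 1}"
    by (auto simp: Basis_vec_def UNIV_2)
  have "axis 1 (1::real) \<noteq> (axis 2 1 :: real^2)"
    by (simp add: axis_eq_axis)
  then show ?thesis
    by (simp only: B) simp
qed

lemma distr_complex_of_vec_lborel: "distr lborel borel complex_of_vec = lborel"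
proof (rule lborel_eqI[symmetric])
  fix l u :: complex assume le: "\<And>b. b \<in> Basis \<Longrightarrow> l \<bullet> b \<le> u \<bullet> b"
  have box_complex: "z \<in> box l u \<longleftrightarrow> Re l < Re z \<and> Re z < Re u \<and> Im l < Im z \<and> Im z < Im u" for z
    by (simp add: mem_box Basis_complex_def)
  have "complex_of_vec -` box l u = box (vector [Re l, Im l]) (vector [Re u, Im u])"
    by (rule set_eqI) (simp add: box_complex mem_box_vec2 complex_of_vec_def)
  then have "emeasure (distr lborel borel complex_of_vec) (box l u)
      = emeasure lborel (box (vector [Re l, Im l]) (vector [Re u, Im u]) :: (real^2) set)"
    by (simp add: emeasure_distr)
  also have "\<dots> = (Re u - Re l) * (Im u - Im l)"
    using le[of 1] le[of \<i>] unfolding emeasure_lborel_box_eq prod_Basis_vec2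
    by (auto simp add: Basis_complex_def inner_axis ennreal_mult Basis_vec_def forall_2 exhaust_2)
  also have "\<dots> = (\<Prod>b\<in>Basis. (u - l) \<bullet> b)"
    by (simp add: Basis_complex_def)
  finally show "emeasure (distr lborel borel complex_of_vec) (box l u) = (\<Prod>b\<in>Basis. (u - l) \<bullet> b)" .
qed simp

lemma distr_vec_of_pair_lborel: "distr lborel borel vec_of_pair = lborel"
proof (rule lborel_eqI[symmetric])
  fix l u :: "real^2" assume le: "\<And>b. b \<in> Basis \<Longrightarrow> l \<bullet> b \<le> u \<bullet> b"
  have "vec_of_pair -` box l u = box (l$1, l$2) (u$1, u$2)"
    by (rule set_eqI) (auto simp: mem_box_vec2 vec_of_pair_def mem_box Basis_prod_def axis_def)
  then have "emeasure (distr lborel borel vec_of_pair) (box l u) = emeasure lborel (box (l$1, l$2) (u$1, u$2))"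
    by (simp add: emeasure_distr)
  also have "\<dots> = (u$1 - l$1) * (u$2 - l$2)"
    using le[of "axis 1 1"] le[of "axis 2 1"] unfolding emeasure_lborel_box_eq
    by (auto simp add: Basis_vec_def inner_axis ennreal_mult Basis_prod_def prod.union_disjoint
        prod.reindex inj_on_def mult.commute)
  also have "\<dots> = (\<Prod>b\<in>Basis. (u - l) \<bullet> b)"
    by (simp add: prod_Basis_vec2 inner_axis)
  finally show "emeasure (distr lborel borel vec_of_pair) (box l u) = (\<Prod>b\<in>Basis. (u - l) \<bullet> b)" .
qed simp

definition polar_rectangle :: "real \<Rightarrow> real \<Rightarrow> (real^2) set" where
  "polar_rectangle r R = {x. r \<le> x$1 \<and> x$1 \<le> R \<and> 0 \<le> x$2 \<and> x$2 < 2*pi}"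

lemma inj_on_polar_map:
  assumes "0 < r"
  shows "inj_on (polar_map c) (polar_rectangle r R)"
proof (rule inj_onI)
  fix x y assume x: "x \<in> polar_rectangle r R" and y: "y \<in> polar_rectangle r R"
    and xy: "polar_map c x = polar_map c y"
  have eq: "of_real (x$1) * cis (x$2) = of_real (y$1) * cis (y$2)"
    using arg_cong[OF xy, of complex_of_vec] by (simp add: complex_of_vec_polar_map)
  have "Arg2pi (of_real (z$1) * cis (z$2)) = z$2" if "z \<in> polar_rectangle r R" for z
    using that assms
    by (intro Arg2pi_unique[of "z$1" "z$2"]) (auto simp: cis_conv_exp mult.commute polar_rectangle_def)
  then have "x$2 = y$2"
    using eq x y by metis
  moreover have "x$1 = y$1"
    using arg_cong[OF eq, of cmod] x y assms by (simp add: norm_mult polar_rectangle_def)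
  ultimately show "x = y"
    by (simp add: vec_eq_iff forall_2)
qed

lemma polar_map_image:
  assumes "0 < r"
  shows "polar_map c ` polar_rectangle r R = complex_of_vec -` annulus c r R"
proof (intro set_eqI iffI)
  fix y assume "y \<in> polar_map c ` polar_rectangle r R"
  then show "y \<in> complex_of_vec -` annulus c r R"
    using assms by (auto simp: complex_of_vec_polar_map annulus_def norm_mult polar_rectangle_def)
next
  fix y assume "y \<in> complex_of_vec -` annulus c r R"
  then have y: "r \<le> cmod (complex_of_vec y - c)" "cmod (complex_of_vec y - c) \<le> R"
    by (auto simp: annulus_def)
  define x :: "real^2" where "x = vector [cmod (complex_of_vec y - c), Arg2pi (complex_of_vec y - c)]"
  have "complex_of_vec (polar_map c x) = complex_of_vec y"
    unfolding complex_of_vec_polar_map x_def by (simp add: complex_eq_iff cos_Arg2pi sin_Arg2pi)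
  then have "polar_map c x = y"
    by (simp add: complex_of_vec_inject)
  moreover have "x \<in> polar_rectangle r R"
    using y Arg2pi[of "complex_of_vec y - c"] by (simp add: x_def polar_rectangle_def)
  ultimately show "y \<in> polar_map c ` polar_rectangle r R"
    by blast
qed

lemma annulus_integral_polar_product:
  fixes g :: "complex \<Rightarrow> real"
  assumes r: "0 < r" and [measurable]: "g \<in> borel_measurable borel"
    and g_int: "set_integrable lborel (annulus c r R) g"
  defines "F \<equiv> \<lambda>p::real \<times> real.
    indicator ({r..R} \<times> {0..<2*pi}) p * (fst p * g (c + of_real (fst p) * cis (snd p)))"
  shows "integrable lborel F" and "(LINT z:annulus c r R|lborel. g z) = integral\<^sup>L lborel F"
proof -
  define A where "A = complex_of_vec -` annulus c r R"
  define G where "G x = g (complex_of_vec x)" for x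
  define H where "H x = \<bar>x$1\<bar> * G (polar_map c x)" for x
  have [measurable]: "A \<in> sets borel"
    unfolding A_def by (rule measurable_sets_borel) measurable
  have [measurable]: "polar_rectangle r R \<in> sets borel"
    unfolding polar_rectangle_def by measurable
  have [measurable]: "G \<in> borel_measurable borel" "H \<in> borel_measurable borel"
    unfolding G_def H_def by measurable
  have G_int: "set_integrable lborel A G"
    using g_int unfolding set_integrable_def A_def G_def
    by (subst (asm) distr_complex_of_vec_lborel[symmetric], subst (asm) integrable_distr_eq)
      (auto simp: indicator_vimage)
  have G_integral: "(LINT z:annulus c r R|lborel. g z) = (LINT x:A|lborel. G x)"
    unfolding set_lebesgue_integral_def A_def G_def
    by (subst distr_complex_of_vec_lborel[symmetric]) (simp add: integral_distr indicator_vimage)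
  have "H absolutely_integrable_on polar_rectangle r R \<and>
      integral (polar_rectangle r R) H = integral A G"
    using has_absolute_integral_change_of_variables_real_vec[of "polar_rectangle r R" "polar_map c"
        polar_map_deriv G "integral A G"]
      has_derivative_polar_map inj_on_polar_map[OF r] polar_map_image[OF r]
      absolutely_integrable_on_iff_set_integrable_lborel[of A G] G_int
    by (simp add: det_polar_map_deriv H_def[abs_def] A_def)
  moreover have H_int: "set_integrable lborel (polar_rectangle r R) H"
    using calculation absolutely_integrable_on_iff_set_integrable_lborel[of "polar_rectangle r R" H]
    by simp
  ultimately have H_integral: "(LINT x:polar_rectangle r R|lborel. H x) = (LINT x:A|lborel. G x)"
    by (simp add: set_borel_integral_eq_integral(2)[OF H_int] set_borel_integral_eq_integral(2)[OF G_int])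
  have F_eq: "F = (\<lambda>p. indicator (polar_rectangle r R) (vec_of_pair p) * H (vec_of_pair p))"
    using r by (auto simp: F_def polar_rectangle_def H_def G_def complex_of_vec_polar_map
        indicator_def fun_eq_iff)
  show "integrable lborel F"
    using H_int unfolding F_eq set_integrable_def
    by (subst (asm) distr_vec_of_pair_lborel[symmetric], subst (asm) integrable_distr_eq) auto
  have "(LINT x:polar_rectangle r R|lborel. H x) = integral\<^sup>L lborel F"
    unfolding F_eq set_lebesgue_integral_def
    by (subst distr_vec_of_pair_lborel[symmetric]) (simp add: integral_distr)
  then show "(LINT z:annulus c r R|lborel. g z) = integral\<^sup>L lborel F"
    using G_integral H_integral by simp
qed

lemma annulus_integral_polar:
  fixes g :: "complex \<Rightarrow> real"
  assumes r: "0 < r" and g_meas: "g \<in> borel_measurable borel"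
    and g_int: "set_integrable lborel (annulus c r R) g"
  shows "set_integrable lborel {r..R} (\<lambda>s. s * (LINT t:{0..<2*pi}|lborel. g (c + of_real s * cis t)))"
    and "(LINT z:annulus c r R|lborel. g z)
      = (LINT s:{r..R}|lborel. s * (LINT t:{0..<2*pi}|lborel. g (c + of_real s * cis t)))"
proof -
  define F where "F = (\<lambda>p::real \<times> real.
    indicator ({r..R} \<times> {0..<2*pi}) p * (fst p * g (c + of_real (fst p) * cis (snd p))))"
  have F_int: "integrable (lborel \<Otimes>\<^sub>M lborel) F"
    unfolding lborel_prod F_def by (rule annulus_integral_polar_product(1)[OF r g_meas g_int])
  have inner: "(\<integral>y. F (x, y) \<partial>lborel)
      = indicator {r..R} x *\<^sub>R (x * (LINT t:{0..<2*pi}|lborel. g (c + of_real x * cis t)))" for x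
    unfolding F_def set_lebesgue_integral_def
    by (simp add: indicator_times mult.assoc mult.left_commute)
  show "set_integrable lborel {r..R} (\<lambda>s. s * (LINT t:{0..<2*pi}|lborel. g (c + of_real s * cis t)))"
    using lborel_pair.integrable_fst'[OF F_int] unfolding inner set_integrable_def .
  have "(LINT z:annulus c r R|lborel. g z) = integral\<^sup>L (lborel \<Otimes>\<^sub>M lborel) F"
    unfolding lborel_prod F_def by (rule annulus_integral_polar_product(2)[OF r g_meas g_int])
  also have "\<dots> = (\<integral>x. (\<integral>y. F (x, y) \<partial>lborel) \<partial>lborel)"
    by (rule lborel_pair.integral_fst'[OF F_int, symmetric])
  finally show "(LINT z:annulus c r R|lborel. g z)
      = (LINT s:{r..R}|lborel. s * (LINT t:{0..<2*pi}|lborel. g (c + of_real s * cis t)))"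
    unfolding inner set_lebesgue_integral_def .
qed

lemma circle_in_annulus: "0 \<le> s \<Longrightarrow> c + of_real s * cis t \<in> annulus c r R \<longleftrightarrow> r \<le> s \<and> s \<le> R"
  by (simp add: annulus_def norm_mult)

definition angular_integral :: "(complex \<Rightarrow> real) \<Rightarrow> complex \<Rightarrow> real \<Rightarrow> real" where
  "angular_integral f c s = integral {0..2*pi} (\<lambda>t. f (c + of_real s * cis t))"

lemma continuous_on_circle_in_ball:
  assumes "continuous_on (ball c R) f" "0 \<le> s" "s < R"
  shows "continuous_on UNIV (\<lambda>t. f (c + of_real s * cis t))"
proof (rule continuous_on_compose2[OF assms(1)])
  show "(\<lambda>t. c + of_real s * cis t) ` UNIV \<subseteq> ball c R"
    using assms(2,3) by (auto simp: dist_norm norm_mult)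
qed (intro continuous_intros)

lemma set_integral_circle_eq_angular_integral:
  assumes "continuous_on (ball c R) f" "0 \<le> s" "s < R"
  shows "(LINT t:{0..<2*pi}|lborel. f (c + of_real s * cis t)) = angular_integral f c s"
proof -
  have "set_integrable lborel {0..2*pi} (\<lambda>t. f (c + of_real s * cis t))"
    by (rule borel_integrable_atLeastAtMost'[OF continuous_on_subset[OF continuous_on_circle_in_ball[OF assms]]])
      auto
  then have "set_integrable lborel {0..<2*pi} (\<lambda>t. f (c + of_real s * cis t))"
    by (rule set_integrable_subset) auto
  then have "(LINT t:{0..<2*pi}|lborel. f (c + of_real s * cis t))
      = integral {0..<2*pi} (\<lambda>t. f (c + of_real s * cis t))"
    by (rule set_borel_integral_eq_integral(2))
  also have "\<dots> = angular_integral f c s"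
    unfolding angular_integral_def by (rule integral_subset_negligible) auto
  finally show ?thesis .
qed

text \<open>Cutting \<open>f\<close> off to the open disc makes it Borel measurable without changing it
  off the negligible outer circle.\<close>

lemma annulus_integral_cutoff:
  fixes f :: "complex \<Rightarrow> real"
  assumes f_cont: "continuous_on (ball c R) f"
    and f_int: "f absolutely_integrable_on annulus c r R"
  defines "g \<equiv> \<lambda>z. indicator (ball c R) z * f z"
  shows "g \<in> borel_measurable borel" and "set_integrable lborel (annulus c r R) g"
    and "(LINT z:annulus c r R|lborel. g z) = integral (annulus c r R) f"
proof -
  show g_meas [measurable]: "g \<in> borel_measurable borel"
    using borel_measurable_continuous_on_indicator[OF _ f_cont] unfolding g_def by simp
  have g_eq: "g z = f z" if "z \<in> annulus c r R - sphere c R" for z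
    using that by (auto simp: g_def annulus_def dist_norm norm_minus_commute)
  have "g absolutely_integrable_on annulus c r R"
    by (rule absolutely_integrable_spike[OF f_int negligible_sphere]) (use g_eq in auto)
  moreover have "(\<lambda>z. indicator (annulus c r R) z *\<^sub>R g z) \<in> borel_measurable borel"
    by measurable
  ultimately show g_int: "set_integrable lborel (annulus c r R) g"
    using absolutely_integrable_on_iff_set_integrable_lborel by blast
  have "(LINT z:annulus c r R|lborel. g z) = integral (annulus c r R) g"
    by (rule set_borel_integral_eq_integral(2)[OF g_int])
  also have "\<dots> = integral (annulus c r R) f"
    by (rule integral_spike[OF negligible_sphere[of c R]]) (use g_eq in auto)
  finally show "(LINT z:annulus c r R|lborel. g z) = integral (annulus c r R) f" .
qed

lemma integral_annulus_radial:
  fixes f :: "complex \<Rightarrow> real"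
  assumes r: "0 < r"
    and f_cont: "continuous_on (ball c R) f"
    and f_int: "f absolutely_integrable_on annulus c r R"
  shows "angular_integral f c absolutely_integrable_on {r..R}"
    and "integral (annulus c r R) f = integral {r..R} (\<lambda>s. s * angular_integral f c s)"
proof -
  define g where "g z = indicator (ball c R) z * f z" for z
  define k where "k s = s * (LINT t:{0..<2*pi}|lborel. g (c + of_real s * cis t))" for s
  note cutoff = annulus_integral_cutoff[OF f_cont f_int, folded g_def]
  have k_int: "set_integrable lborel {r..R} k"
    using annulus_integral_polar(1)[OF r cutoff(1,2)] unfolding k_def .
  have k_eq: "k s = s * angular_integral f c s" if "s \<in> {r..R} - {R}" for s
  proof -
    have "g (c + of_real s * cis t) = f (c + of_real s * cis t)" for t
      using that r by (auto simp: g_def dist_norm norm_mult)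
    then show ?thesis
      using set_integral_circle_eq_angular_integral[OF f_cont, of s] that r by (simp add: k_def)
  qed
  have "k absolutely_integrable_on {r..R}"
    using k_int absolutely_integrable_on_iff_set_integrable_lborel[of "{r..R}" k]
      borel_measurable_integrable[OF k_int[unfolded set_integrable_def]] by simp
  moreover have "continuous_on {r..R} (\<lambda>s::real. 1/s)"
    using r by (intro continuous_intros) auto
  ultimately have "(\<lambda>s. (1/s) * k s) absolutely_integrable_on {r..R}"
    by (intro absolutely_integrable_bounded_measurable_product_real continuous_imp_measurable_on_sets_lebesgue
        compact_imp_bounded compact_continuous_image) auto
  then show "angular_integral f c absolutely_integrable_on {r..R}"
    by (rule absolutely_integrable_spike[of _ _ "{R}"]) (use k_eq r in auto)
  have "integral {r..R} (\<lambda>s. s * angular_integral f c s) = integral {r..R} k"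
    by (rule integral_spike[of "{R}"]) (use k_eq in auto)
  also have "\<dots> = integral (annulus c r R) f"
    using set_borel_integral_eq_integral(2)[OF k_int] annulus_integral_polar(2)[OF r cutoff(1,2)] cutoff(3)
    unfolding k_def by simp
  finally show "integral (annulus c r R) f = integral {r..R} (\<lambda>s. s * angular_integral f c s)"
    by simp
qed

section \<open>Convex functions on an annulus\<close>

lemma measure_annulus:
  assumes "0 < r" "r \<le> R"
  shows "measure lebesgue (annulus c r R) = pi * (R^2 - r^2)"
proof -
  have "measure lebesgue (annulus c r R) = integral (annulus c r R) (\<lambda>_. 1::real)"
    by (rule lmeasure_integral[OF lmeasurable_compact[OF compact_annulus]])
  also have "\<dots> = integral {r..R} (\<lambda>s. s * angular_integral (\<lambda>_. 1) c s)"
    using assms(1) lmeasurable_compact[OF compact_annulus]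
    by (intro integral_annulus_radial(2)) auto
  also have "\<dots> = integral {r..R} (\<lambda>s. 2 * pi * s)"
    by (simp add: angular_integral_def mult.commute)
  also have "\<dots> = pi * R^2 - pi * r^2"
    using assms(2) by (intro integral_unique has_integral_real_antiderivative)
      (auto intro!: derivative_eq_intros)
  finally show ?thesis
    by (simp add: algebra_simps)
qed

lemma convex_on_angular_integral:
  fixes f :: "complex \<Rightarrow> real"
  assumes convex: "convex_on U f"
    and circles: "\<And>s t. s \<in> {a..b} \<Longrightarrow> c + of_real s * cis t \<in> U"
    and int: "\<And>s. s \<in> {a..b} \<Longrightarrow> (\<lambda>t. f (c + of_real s * cis t)) integrable_on {0..2*pi}"
  shows "convex_on {a..b} (angular_integral f c)"
proof (rule convex_onI)
  fix u x y :: real assume u: "0 < u" "u < 1" and xy: "x \<in> {a..b}" "y \<in> {a..b}"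
  have point: "f (c + of_real ((1 - u) *\<^sub>R x + u *\<^sub>R y) * cis t)
      \<le> (1 - u) * f (c + of_real x * cis t) + u * f (c + of_real y * cis t)" for t
  proof -
    have "c + of_real ((1 - u) *\<^sub>R x + u *\<^sub>R y) * cis t
        = (1 - u) *\<^sub>R (c + of_real x * cis t) + u *\<^sub>R (c + of_real y * cis t)"
      by (simp add: scaleR_conv_of_real algebra_simps)
    then show ?thesis
      using convex_onD[OF convex, of u] u circles xy by auto
  qed
  have mid: "(1 - u) *\<^sub>R x + u *\<^sub>R y \<in> {a..b}"
    using u xy convexD[OF convex_real_interval(5)[of a b]] by auto
  have "angular_integral f c ((1 - u) *\<^sub>R x + u *\<^sub>R y)
      \<le> integral {0..2*pi} (\<lambda>t. (1 - u) * f (c + of_real x * cis t) + u * f (c + of_real y * cis t))"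
    unfolding angular_integral_def
    by (rule integral_le[OF int[OF mid]]) (use xy point in \<open>auto intro!: integrable_add integrable_on_mult_right int\<close>)
  also have "\<dots> = (1 - u) * angular_integral f c x + u * angular_integral f c y"
    unfolding angular_integral_def using int xy
    by (subst integral_add) (auto intro: integrable_on_mult_right)
  finally show "angular_integral f c ((1 - u) *\<^sub>R x + u *\<^sub>R y)
      \<le> (1 - u) * angular_integral f c x + u * angular_integral f c y" .
qed simp

lemma ball_subset_of_annulus_subset:
  assumes "convex U" "annulus c r R \<subseteq> U" "r \<le> R"
  shows "ball c R \<subseteq> U"
proof
  fix z assume z: "z \<in> ball c R"
  define \<rho> where "\<rho> = cmod (z - c)"
  define w where "w = (if z = c then 1 else (z - c) / of_real \<rho>)"
  define u where "u = (R + \<rho>) / (2*R)"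
  have \<rho>: "0 \<le> \<rho>" "\<rho> < R"
    using z by (auto simp: \<rho>_def dist_norm norm_minus_commute)
  have z_eq: "z = c + of_real \<rho> * w"
    using \<rho> by (auto simp: w_def \<rho>_def)
  have "cmod w = 1"
    using \<rho> by (auto simp: w_def \<rho>_def norm_divide)
  then have "c + of_real R * w \<in> U" "c - of_real R * w \<in> U"
    using assms(2,3) \<rho> by (auto simp: annulus_def norm_mult)
  moreover have "0 \<le> u" "u \<le> 1"
    using \<rho> by (auto simp: u_def field_simps)
  ultimately have "u *\<^sub>R (c + of_real R * w) + (1 - u) *\<^sub>R (c - of_real R * w) \<in> U"
    using convexD[OF assms(1)] by auto
  moreover have "u *\<^sub>R (c + of_real R * w) + (1 - u) *\<^sub>R (c - of_real R * w) = z"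
    unfolding z_eq u_def using \<rho> by (simp add: scaleR_conv_of_real field_simps)
  ultimately show "z \<in> U"
    by simp
qed

lemma centre_convex_combination:
  fixes z c :: complex
  assumes "0 < r" "r \<le> cmod (z - c)"
  obtains q l where "q \<in> cball c (r/2)" "0 < l" "l \<le> 1" "1 / l \<le> (2 * cmod (z - c) + r) / r"
    "(1 - l) *\<^sub>R q + l *\<^sub>R z = c"
proof -
  define \<rho> where "\<rho> = cmod (z - c)"
  define w where "w = (z - c) / of_real \<rho>"
  define q where "q = c - of_real (r/2) * w"
  define l where "l = (r/2) / (\<rho> + r/2)"
  have w: "cmod w = 1" "z = c + of_real \<rho> * w"
    using assms by (auto simp: w_def norm_divide \<rho>_def)
  have "q \<in> cball c (r/2)"
    using assms(1) w by (simp add: q_def dist_norm norm_mult)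
  moreover have "0 < l" "l \<le> 1" "1 / l \<le> (2 * cmod (z - c) + r) / r"
    using assms by (auto simp: l_def field_simps \<rho>_def)
  moreover have "(1 - l) *\<^sub>R q + l *\<^sub>R z = c"
  proof -
    have "(1 - l) *\<^sub>R q + l *\<^sub>R z = c + of_real (l * \<rho> - (1 - l) * (r/2)) * w"
      unfolding q_def by (subst w(2)) (simp add: scaleR_conv_of_real algebra_simps)
    also have "l * \<rho> - (1 - l) * (r/2) = 0"
      using assms by (simp add: l_def field_simps \<rho>_def)
    finally show ?thesis
      by simp
  qed
  ultimately show thesis
    using that by simp
qed

lemma convex_on_bdd_below_annulus:
  fixes f :: "complex \<Rightarrow> real"
  assumes convex: "convex_on U f" and ball: "ball c R \<subseteq> U" and annulus: "annulus c r R \<subseteq> U"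
    and r: "0 < r" "r < R"
  obtains B where "\<And>z. z \<in> annulus c r R \<Longrightarrow> B \<le> f z"
proof -
  have small_ball: "cball c (r/2) \<subseteq> ball c R"
    using r by auto
  moreover have "continuous_on (ball c R) f"
    by (rule convex_on_continuous[OF open_ball convex_on_subset[OF convex ball convex_ball]])
  ultimately have "compact (f ` cball c (r/2))"
    by (intro compact_continuous_image[OF _ compact_cball]) (rule continuous_on_subset)
  then obtain M where M: "\<And>w. w \<in> cball c (r/2) \<Longrightarrow> \<bar>f w\<bar> \<le> M"
    using compact_imp_bounded[THEN bounded_iff[THEN iffD1]] by fastforce
  have "- (2 * M * (2*R + r) / r) \<le> f z" if z: "z \<in> annulus c r R" for z
  proof -
    have "r \<le> cmod (z - c)"
      using z by (simp add: annulus_def)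
    then obtain q l where q: "q \<in> cball c (r/2)" and l: "0 < l" "l \<le> 1" "1 / l \<le> (2 * cmod (z - c) + r) / r"
      and c_eq: "(1 - l) *\<^sub>R q + l *\<^sub>R z = c"
      using centre_convex_combination[OF r(1)] by blast
    have "q \<in> U" "z \<in> U"
      using q z ball annulus small_ball by auto
    then have "f c \<le> (1 - l) * f q + l * f z"
      using convex_onD[OF convex, of l q z] l c_eq by simp
    moreover have "- M \<le> f c" "f q \<le> M" "0 \<le> M"
      using M[of c] M[OF q] r by auto
    moreover have "(1 - l) * f q \<le> (1 - l) * M"
      using l \<open>f q \<le> M\<close> by (intro mult_left_mono) auto
    moreover have "(1 - l) * M \<le> M"
      using l \<open>0 \<le> M\<close> by (simp add: algebra_simps)
    ultimately have "- (2 * M) \<le> l * f z"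
      by linarith
    then have "- (2 * M) * (1 / l) \<le> f z"
      using l by (simp add: field_simps)
    moreover have "1 / l \<le> (2*R + r) / r"
      using l(3) z r by (auto simp: annulus_def divide_right_mono intro: order_trans)
    then have "- (2 * M) * ((2*R + r) / r) \<le> - (2 * M) * (1 / l)"
      using \<open>0 \<le> M\<close> by (intro mult_left_mono_neg) auto
    ultimately show ?thesis
      by simp
  qed
  then show thesis
    using that by blast
qed

lemma annulus_weights_identity:
  fixes r R a b d e :: real
  assumes "0 < r" "r < R"
  shows "(R - r) * ((2*r + R)/9 * a + r/6 * b + R/6 * d + (r + 2*R)/9 * e) / (pi * (R^2 - r^2)) =
    (1/3) * (R / (r + R) * (d / (2*pi)) + r / (r + R) * (b / (2*pi)))
    + (2/3) * ((r + 2*R) / (3*(r + R)) * (e / (2*pi)) + (2*r + R) / (3*(r + R)) * (a / (2*pi)))"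
proof -
  have "R^2 - r^2 = (R - r) * (r + R)"
    by (simp add: power2_eq_square algebra_simps)
  then have cancel: "(R - r) * X / (pi * (R^2 - r^2)) = X / (pi * (r + R))" for X
    using assms by simp
  define q where "q = r + R"
  have "q \<noteq> 0" "R = q - r"
    using assms by (simp_all add: q_def)
  then show ?thesis
    unfolding cancel q_def[symmetric] by (simp add: field_simps)
qed

lemma avg_circle_eq_angular_integral: "0 < s \<Longrightarrow> avg_circle f c s = angular_integral f c s / (2 * pi)"
  by (simp add: avg_circle_def angular_integral_def)

lemma integral_annulus_convex_le:
  fixes f :: "complex \<Rightarrow> real"
  assumes "convex U" and r: "0 < r" "r < R" and annulus: "annulus c r R \<subseteq> U"
    and convex: "convex_on U f" and f_int: "f integrable_on annulus c r R"
    and outer_int: "(\<lambda>t. f (c + of_real R * cis t)) integrable_on {0..2*pi}"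
  shows "integral (annulus c r R) f \<le> (R - r) * ((2*r + R)/9 * angular_integral f c r
      + r/6 * angular_integral f c ((2*r + R)/3) + R/6 * angular_integral f c ((r + 2*R)/3)
      + (r + 2*R)/9 * angular_integral f c R)"
proof -
  have ball: "ball c R \<subseteq> U"
    using ball_subset_of_annulus_subset assms(1) r annulus by simp
  have f_cont: "continuous_on (ball c R) f"
    by (rule convex_on_continuous[OF open_ball convex_on_subset[OF convex ball convex_ball]])
  obtain B where "\<And>z. z \<in> annulus c r R \<Longrightarrow> B \<le> f z"
    using convex_on_bdd_below_annulus[OF convex ball annulus r] by blast
  then have "f absolutely_integrable_on annulus c r R"
    using lmeasurable_compact[OF compact_annulus]
    by (intro absolutely_integrable_absolutely_integrable_lbound[OF f_int, of "\<lambda>_. B"]) auto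
  note radial = integral_annulus_radial[OF r(1) f_cont this]
  have "(\<lambda>t. f (c + of_real s * cis t)) integrable_on {0..2*pi}" if "s \<in> {r..R}" for s
    using that r outer_int continuous_on_circle_in_ball[OF f_cont, of s]
    by (cases "s = R") (auto intro: integrable_continuous_interval continuous_on_subset)
  then have "convex_on {r..R} (angular_integral f c)"
    using annulus r by (intro convex_on_angular_integral[OF convex]) (auto simp: circle_in_annulus subset_iff)
  then show ?thesis
    using convex_on_integral_mult_id_le[OF r _ radial(1)] radial(2) by simp
qed

theorem theorem5p3:
  fixes U :: "complex set" and c :: complex and r R :: real and f :: "complex \<Rightarrow> real"
  assumes "convex U"
    and "0 < r" and "r < R"
    and "annulus c r R \<subseteq> U"
    and "convex_on U f"
    and "f integrable_on annulus c r R"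
    and "(\<lambda>t. f (c + of_real r * cis t)) integrable_on {0..2*pi}"
    and "(\<lambda>t. f (c + of_real R * cis t)) integrable_on {0..2*pi}"
  shows "avg_area f (annulus c r R) \<le>
      (1/3) * (R / (r + R) * avg_circle f c ((r + 2*R) / 3)
             + r / (r + R) * avg_circle f c ((2*r + R) / 3))
    + (2/3) * ((r + 2*R) / (3*(r + R)) * avg_circle f c R
             + (2*r + R) / (3*(r + R)) * avg_circle f c r)"
proof -
  have "0 < pi * (R^2 - r^2)"
    using assms(2,3) by (simp add: power_strict_mono)
  moreover have "measure lebesgue (annulus c r R) = pi * (R^2 - r^2)"
    using assms(2,3) by (intro measure_annulus) auto
  ultimately have "avg_area f (annulus c r R) \<le> (R - r) * ((2*r + R)/9 * angular_integral f c r
      + r/6 * angular_integral f c ((2*r + R)/3) + R/6 * angular_integral f c ((r + 2*R)/3)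
      + (r + 2*R)/9 * angular_integral f c R) / (pi * (R^2 - r^2))"
    unfolding avg_area_def
    using integral_annulus_convex_le[OF assms(1-6,8)] by (simp add: divide_right_mono)
  moreover have "0 < r" "0 < R" "0 < (r + 2*R)/3" "0 < (2*r + R)/3"
    using assms(2,3) by auto
  ultimately show ?thesis
    by (simp only: annulus_weights_identity[OF assms(2,3)] avg_circle_eq_angular_integral)
qed

end
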